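(* Let $n\ge1$, $m\ge3$ be integers, $q$ a prime power, $\mathbf{x}\in\mathbb{F}_q^n$ and $a=x_1+\cdots+x_n$. Then $$\mathbb{E}_{\pi,\pi'\sim\Pi_{mn},\ \mathbf{t}\sim\mathcal{U}_a}\left[Y_{\mathbf{t},\pi}\,Y_{\mathbf{t},\pi'}\right]\le\sum_{k\ge1}\frac{q^k}{q^{2n-1}}\left(\frac{n^2}{(n/2)^{m-2}}\right)^{\frac{k-1}{2}},$$ where $\pi,\pi',\mathbf{t}$ are independent.
   Context: $\Pi_{mn}$ is the set of permutations of $[mn]$, and $\pi\sim\Pi_{mn}$ means $\pi$ is uniform on it. $\mathcal{U}_a$ is the uniform distribution on vectors in $\mathbb{F}_q^{mn}$ whose coordinates sum to $a$. For $\mathbf{t}\in\mathbb{F}_q^{mn}$ and $\pi\in\Pi_{mn}$, $Y_{\mathbf{t},\pi}$ is the indicator that $t_{\pi(m(i-1)+1)}+\cdots+t_{\pi(mi)}=x_i$ for all $i\in[n]$. *)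

theory Defs
  imports "HOL-Analysis.Analysis" "HOL-Library.Extended_Nonnegative_Real"
begin

text \<open>Indices are 0-based: [mn] is rendered as {0..<m*n}, block i (0 \<le> i < n) is
  {m*i, ..., m*i+m-1}. The finite field F_q is a finite field type 'a with q = CARD('a).\<close>

definition perms :: "nat \<Rightarrow> (nat \<Rightarrow> nat) set" where
  "perms N = {\<pi>. \<pi> permutes {0..<N}}"

text \<open>Support of U_a: vectors in F_q^N (extensional functions on {0..<N}) with coordinate sum a.\<close>
definition vecs_sum :: "nat \<Rightarrow> 'a::{field,finite} \<Rightarrow> (nat \<Rightarrow> 'a) set" where
  "vecs_sum N a = {t \<in> {0..<N} \<rightarrow>\<^sub>E (UNIV :: 'a set). (\<Sum>j<N. t j) = a}"

definition Y :: "nat \<Rightarrow> nat \<Rightarrow> (nat \<Rightarrow> 'a::{field,finite}) \<Rightarrow> (nat \<Rightarrow> 'a)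
                  \<Rightarrow> (nat \<Rightarrow> nat) \<Rightarrow> real" where
  "Y m n x t \<pi> = (if \<forall>i<n. (\<Sum>j<m. t (\<pi> (m*i + j))) = x i then 1 else 0)"

definition second_moment :: "nat \<Rightarrow> nat \<Rightarrow> (nat \<Rightarrow> 'a::{field,finite}) \<Rightarrow> real" where
  "second_moment m n x =
     (let a = (\<Sum>i<n. x i); P = perms (m*n); T = vecs_sum (m*n) a in
      (\<Sum>\<pi>\<in>P. \<Sum>\<pi>'\<in>P. \<Sum>t\<in>T. Y m n x t \<pi> * Y m n x t \<pi>')
        / (real (card P) * real (card P) * real (card T)))"

end

theory Submission
  imports Defs
begin

text \<open>For fixed \<open>\<pi>, \<pi>'\<close> the event \<open>Y\<^sub>t\<^sub>,\<^sub>\<pi> Y\<^sub>t\<^sub>,\<^sub>\<pi>\<^sub>' = 1\<close> is a linear system in \<open>t\<close> with one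
  equation per block of \<open>\<pi>\<close> and one per block of \<open>\<pi>'\<close>. By rank-nullity it has at most
  \<open>q^(mn) / q^(2n)\<close> times as many solutions as its dual has elements, and the dual consists of
  the pairs \<open>(\<alpha>, \<gamma>)\<close> of block labellings that give every coordinate the same label under
  \<open>\<pi>\<close> and under \<open>\<pi>'\<close>; moreover \<open>U\<^sub>a\<close> has at least \<open>q^(mn-1)\<close> elements.
  After exchanging the sums, given \<open>\<pi>\<close> and the labellings, a compatible \<open>\<pi>'\<close> exists only if
  \<open>\<alpha>\<close> and \<open>\<gamma>\<close> have the same histogram \<open>s\<close>, and then there are at most \<open>\<Prod>\<^sub>v (m s\<^sub>v)!\<close> of them.
  Grouping the labellings by histogram leaves \<open>\<Sum>\<^sub>s D(s)\<^sup>2 \<Prod>\<^sub>v (m s\<^sub>v)! / (mn)!\<close> with \<open>D(s)\<close> a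
  multinomial coefficient. Multinomial and factorial estimates bound the term of \<open>s\<close> by
  \<open>r^((k-1)/2) / n^(k-1)\<close> with \<open>r = n\<^sup>2 / (n/2)^(m-2)\<close>, where \<open>k\<close> is the number of labels
  used, and there are at most \<open>C(q, k) n^(k-1) \<le> q^k n^(k-1)\<close> histograms using \<open>k\<close> labels.\<close>

section \<open>Linear systems given by two partitions\<close>

lemma card_le_sum_restrict_insert:
  assumes "A \<subseteq> extensional (insert p S)" "finite W" "\<And>w. finite (B w)"
    and "\<And>f. f \<in> A \<Longrightarrow> f p \<in> W \<and> restrict f S \<in> B (f p)"
  shows "card A \<le> (\<Sum>w\<in>W. card (B w))"
proof -
  have "inj_on (\<lambda>f. (f p, restrict f S)) A"
  proof (rule inj_onI)
    fix f g assume "f \<in> A" "g \<in> A" and eq: "(f p, restrict f S) = (g p, restrict g S)"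
    show "f = g"
    proof (rule extensionalityI[of _ "insert p S"])
      fix e assume "e \<in> insert p S"
      then show "f e = g e" using eq by (cases "e = p") (auto dest: fun_cong[of _ _ e])
    qed (use \<open>f \<in> A\<close> \<open>g \<in> A\<close> assms(1) in auto)
  qed
  then have "card A \<le> card (SIGMA w:W. B w)"
    by (rule card_inj_on_le) (use assms in auto)
  also have "\<dots> = (\<Sum>w\<in>W. card (B w))" using assms(2,3) by simp
  finally show ?thesis .
qed

definition sum_system_solutions ::
    "'e set \<Rightarrow> 'i set \<Rightarrow> 'j set \<Rightarrow> ('e \<Rightarrow> 'i) \<Rightarrow> ('e \<Rightarrow> 'j) \<Rightarrow> ('i \<Rightarrow> 'a::field) \<Rightarrow> ('j \<Rightarrow> 'a) \<Rightarrow> ('e \<Rightarrow> 'a) set" where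
  "sum_system_solutions E I J a b y z =
     {t \<in> E \<rightarrow>\<^sub>E UNIV. (\<forall>i\<in>I. (\<Sum>e\<in>{e\<in>E. a e = i}. t e) = y i) \<and>
                     (\<forall>j\<in>J. (\<Sum>e\<in>{e\<in>E. b e = j}. t e) = z j)}"

text \<open>A pair \<open>(\<alpha>, \<gamma>)\<close> lies in the dual iff \<open>\<Sum>\<^sub>i \<alpha>\<^sub>i (equation i) = \<Sum>\<^sub>j \<gamma>\<^sub>j (equation j)\<close> holds
  coefficientwise, i.e. the pairs form the left kernel of the coefficient matrix.\<close>
definition sum_system_dual ::
    "'e set \<Rightarrow> 'i set \<Rightarrow> 'j set \<Rightarrow> ('e \<Rightarrow> 'i) \<Rightarrow> ('e \<Rightarrow> 'j) \<Rightarrow> (('i \<Rightarrow> 'a::field) \<times> ('j \<Rightarrow> 'a)) set" where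
  "sum_system_dual E I J a b =
     {(\<alpha>, \<gamma>). \<alpha> \<in> I \<rightarrow>\<^sub>E UNIV \<and> \<gamma> \<in> J \<rightarrow>\<^sub>E UNIV \<and> (\<forall>e\<in>E. \<alpha> (a e) = \<gamma> (b e))}"

lemma finite_sum_system_solutions [simp]:
  "finite E \<Longrightarrow> finite (sum_system_solutions E I J a b y z :: ('e \<Rightarrow> 'a::{field,finite}) set)"
  unfolding sum_system_solutions_def by (rule finite_subset[OF _ finite_PiE]) auto

lemma finite_sum_system_dual [simp]:
  "finite I \<Longrightarrow> finite J \<Longrightarrow> finite (sum_system_dual E I J a b :: (('i \<Rightarrow> 'a::{field,finite}) \<times> _) set)"
  unfolding sum_system_dual_def
  by (rule finite_subset[OF _ finite_cartesian_product[OF finite_PiE finite_PiE]]) auto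

lemma sum_system_dual_insert:
  "sum_system_dual (insert e E) I J a b = {l \<in> sum_system_dual E I J a b. fst l (a e) = snd l (b e)}"
  unfolding sum_system_dual_def by auto

lemma sum_system_solutions_restrict:
  fixes a :: "'e \<Rightarrow> 'i" and b :: "'e \<Rightarrow> 'j" and t :: "'e \<Rightarrow> 'a::field"
  assumes "e0 \<notin> E" "finite E" and t: "t \<in> sum_system_solutions (insert e0 E) I J a b y z"
  shows "restrict t E \<in> sum_system_solutions E I J a b (y(a e0 := y (a e0) - t e0)) (z(b e0 := z (b e0) - t e0))"
proof -
  have split: "(\<Sum>e\<in>{e\<in>insert e0 E. c e = k}. t e) = (if c e0 = k then t e0 else 0) + (\<Sum>e\<in>{e\<in>E. c e = k}. restrict t E e)"
    for c :: "'e \<Rightarrow> 'k" and k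
  proof -
    have "{e\<in>insert e0 E. c e = k} = (if c e0 = k then insert e0 {e\<in>E. c e = k} else {e\<in>E. c e = k})"
      by auto
    then show ?thesis using assms(1,2) by (auto intro!: sum.cong)
  qed
  have ty: "\<forall>i\<in>I. (\<Sum>e\<in>{e\<in>insert e0 E. a e = i}. t e) = y i"
    and tz: "\<forall>j\<in>J. (\<Sum>e\<in>{e\<in>insert e0 E. b e = j}. t e) = z j"
    using t unfolding sum_system_solutions_def by blast+
  show ?thesis
    unfolding sum_system_solutions_def
  proof (intro CollectI conjI ballI)
    fix i assume "i \<in> I"
    then show "(\<Sum>e\<in>{e\<in>E. a e = i}. restrict t E e) = (y(a e0 := y (a e0) - t e0)) i"
      using ty split[of a i] by (auto simp: algebra_simps)
  next
    fix j assume "j \<in> J"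
    then show "(\<Sum>e\<in>{e\<in>E. b e = j}. restrict t E e) = (z(b e0 := z (b e0) - t e0)) j"
      using tz split[of b j] by (auto simp: algebra_simps)
  qed auto
qed

lemma card_sum_system_solutions_insert_le:
  fixes a :: "'e \<Rightarrow> 'i" and b :: "'e \<Rightarrow> 'j" and y :: "'i \<Rightarrow> 'a::{field,finite}"
  assumes "finite E" "e0 \<notin> E"
  shows "card (sum_system_solutions (insert e0 E) I J a b y z)
    \<le> (\<Sum>w\<in>UNIV. card (sum_system_solutions E I J a b (y(a e0 := y (a e0) - w)) (z(b e0 := z (b e0) - w))))"
proof (rule card_le_sum_restrict_insert)
  show "sum_system_solutions (insert e0 E) I J a b y z \<subseteq> extensional (insert e0 E)"
    unfolding sum_system_solutions_def by (auto simp: PiE_def)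
qed (use sum_system_solutions_restrict[OF assms(2,1)] assms(1) in simp_all)

lemma sum_system_pairing:
  assumes "finite E" "finite I" "finite J" "a ` E \<subseteq> I" "b ` E \<subseteq> J"
    and t: "t \<in> sum_system_solutions E I J a b y z" and l: "(\<alpha>, \<gamma>) \<in> sum_system_dual E I J a b"
  shows "(\<Sum>i\<in>I. \<alpha> i * y i) = (\<Sum>j\<in>J. \<gamma> j * z j)"
proof -
  have ty: "\<forall>i\<in>I. (\<Sum>e\<in>{e\<in>E. a e = i}. t e) = y i" and tz: "\<forall>j\<in>J. (\<Sum>e\<in>{e\<in>E. b e = j}. t e) = z j"
    using t unfolding sum_system_solutions_def by auto
  have "(\<Sum>i\<in>I. \<alpha> i * y i) = (\<Sum>i\<in>I. \<Sum>e\<in>{e\<in>E. a e = i}. \<alpha> (a e) * t e)"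
    by (rule sum.cong) (use ty in \<open>simp_all flip: sum_distrib_left\<close>)
  also have "\<dots> = (\<Sum>e\<in>E. \<alpha> (a e) * t e)" by (rule sum.group) (use assms in auto)
  also have "\<dots> = (\<Sum>e\<in>E. \<gamma> (b e) * t e)" using l unfolding sum_system_dual_def by simp
  also have "\<dots> = (\<Sum>j\<in>J. \<Sum>e\<in>{e\<in>E. b e = j}. \<gamma> (b e) * t e)" by (rule sum.group[symmetric]) (use assms in auto)
  also have "\<dots> = (\<Sum>j\<in>J. \<gamma> j * z j)"
    by (rule sum.cong) (use tz in \<open>simp_all flip: sum_distrib_left\<close>)
  finally show ?thesis .
qed

lemma sum_update_mult:
  fixes f :: "'i \<Rightarrow> 'a::comm_ring"
  assumes "finite I" "i0 \<in> I"
  shows "(\<Sum>i\<in>I. f i * (y(i0 := y i0 - w)) i) = (\<Sum>i\<in>I. f i * y i) - f i0 * w"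
  using assms by (simp add: sum.remove algebra_simps)

lemma sum_system_solutions_shift_unique:
  fixes \<alpha>0 y :: "'i \<Rightarrow> 'a::field"
  assumes "finite E" "finite I" "finite J" "a ` insert e0 E \<subseteq> I" "b ` insert e0 E \<subseteq> J"
    and l0: "(\<alpha>0, \<gamma>0) \<in> sum_system_dual E I J a b" and ne: "\<alpha>0 (a e0) \<noteq> \<gamma>0 (b e0)"
    and "t \<in> sum_system_solutions E I J a b (y(a e0 := y (a e0) - w)) (z(b e0 := z (b e0) - w))"
    and "t' \<in> sum_system_solutions E I J a b (y(a e0 := y (a e0) - w')) (z(b e0 := z (b e0) - w'))"
  shows "w = w'"
proof -
  have pairing: "(\<Sum>i\<in>I. \<alpha>0 i * y i) - \<alpha>0 (a e0) * v = (\<Sum>j\<in>J. \<gamma>0 j * z j) - \<gamma>0 (b e0) * v"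
    if "s \<in> sum_system_solutions E I J a b (y(a e0 := y (a e0) - v)) (z(b e0 := z (b e0) - v))" for s v
  proof -
    have "(\<Sum>i\<in>I. \<alpha>0 i * (y(a e0 := y (a e0) - v)) i) = (\<Sum>j\<in>J. \<gamma>0 j * (z(b e0 := z (b e0) - v)) j)"
      by (rule sum_system_pairing[OF assms(1) _ _ _ _ that l0]) (use assms(2-5) in auto)
    then show ?thesis
      using assms(2-5) by (simp only: sum_update_mult[OF \<open>finite I\<close>] sum_update_mult[OF \<open>finite J\<close>] insert_subset image_insert)
  qed
  from pairing[OF assms(8)] pairing[OF assms(9)]
  have "(\<alpha>0 (a e0) - \<gamma>0 (b e0)) * (w - w') = 0" by algebra
  then show ?thesis using ne by simp
qed

lemma card_sum_system_dual_le_insert: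
  fixes a :: "'e \<Rightarrow> 'i" and b :: "'e \<Rightarrow> 'j" and \<alpha>0 :: "'i \<Rightarrow> 'a::{field,finite}"
  assumes "finite I" "finite J" "a ` insert e0 E \<subseteq> I" "b ` insert e0 E \<subseteq> J"
    and l0: "(\<alpha>0, \<gamma>0) \<in> sum_system_dual E I J a b" and ne: "\<alpha>0 (a e0) \<noteq> \<gamma>0 (b e0)"
  shows "card (sum_system_dual E I J a b :: (('i \<Rightarrow> 'a) \<times> ('j \<Rightarrow> 'a)) set)
           \<le> card (sum_system_dual (insert e0 E) I J a b :: (('i \<Rightarrow> 'a) \<times> ('j \<Rightarrow> 'a)) set) * CARD('a)"
proof -
  define d where "d l = (fst l (a e0) - snd l (b e0)) / (\<alpha>0 (a e0) - \<gamma>0 (b e0))"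
    for l :: "('i \<Rightarrow> 'a) \<times> ('j \<Rightarrow> 'a)"
  define proj where "proj l = (restrict (\<lambda>i. fst l i - d l * \<alpha>0 i) I, restrict (\<lambda>j. snd l j - d l * \<gamma>0 j) J)"
    for l :: "('i \<Rightarrow> 'a) \<times> ('j \<Rightarrow> 'a)"
  have proj_dual: "proj l \<in> sum_system_dual (insert e0 E) I J a b" if l: "l \<in> sum_system_dual E I J a b" for l
  proof -
    have "fst l (a e0) - d l * \<alpha>0 (a e0) = snd l (b e0) - d l * \<gamma>0 (b e0)"
      using ne unfolding d_def by (simp add: field_simps)
    then show ?thesis
      using l l0 assms(3,4) unfolding proj_def sum_system_dual_def by (auto simp: image_subset_iff)
  qed
  have "inj_on (\<lambda>l. (proj l, d l)) (sum_system_dual E I J a b)"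
  proof (rule inj_onI)
    fix l1 l2 assume l: "l1 \<in> sum_system_dual E I J a b" "l2 \<in> sum_system_dual E I J a b"
      and eq: "(proj l1, d l1) = (proj l2, d l2)"
    have "d l1 = d l2" using eq by simp
    have "fst l1 i = fst l2 i" if "i \<in> I" for i
    proof -
      have "fst (proj l1) i = fst (proj l2) i" using eq by simp
      then show ?thesis using that \<open>d l1 = d l2\<close> by (simp add: proj_def)
    qed
    moreover have "snd l1 j = snd l2 j" if "j \<in> J" for j
    proof -
      have "snd (proj l1) j = snd (proj l2) j" using eq by simp
      then show ?thesis using that \<open>d l1 = d l2\<close> by (simp add: proj_def)
    qed
    ultimately show "l1 = l2"
      using l unfolding sum_system_dual_def
      by (auto intro!: prod_eqI extensionalityI[where A=I] extensionalityI[where A=J] simp: PiE_def)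
  qed
  then have "card (sum_system_dual E I J a b :: (('i \<Rightarrow> 'a) \<times> ('j \<Rightarrow> 'a)) set)
      \<le> card ((sum_system_dual (insert e0 E) I J a b :: (('i \<Rightarrow> 'a) \<times> ('j \<Rightarrow> 'a)) set) \<times> (UNIV :: 'a set))"
    by (rule card_inj_on_le) (use proj_dual assms(1,2) in auto)
  then show ?thesis by (simp add: card_cartesian_product)
qed

text \<open>Rank-nullity in counting form: a consistent system has \<open>q^|E| / q^rank\<close> solutions and
  its dual has \<open>q^(|I| + |J| - rank)\<close> elements. The induction adds one variable at a time: either
  every dual vector survives, or one of them pins down the value of the new variable.\<close>
lemma card_sum_system_solutions_le:
  fixes a :: "'e \<Rightarrow> 'i" and b :: "'e \<Rightarrow> 'j" and y :: "'i \<Rightarrow> 'a::{field,finite}"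
  assumes "finite E" "finite I" "finite J" "a ` E \<subseteq> I" "b ` E \<subseteq> J"
  shows "card (sum_system_solutions E I J a b y z) * CARD('a) ^ (card I + card J)
           \<le> CARD('a) ^ card E * card (sum_system_dual E I J a b :: (('i \<Rightarrow> 'a) \<times> ('j \<Rightarrow> 'a)) set)"
  using assms
proof (induction E arbitrary: y z rule: finite_induct)
  case empty
  have "sum_system_solutions {} I J a b y z \<subseteq> {\<lambda>_. undefined}"
    unfolding sum_system_solutions_def by auto
  from card_mono[OF _ this] have "card (sum_system_solutions {} I J a b y z) \<le> 1"
    by simp
  moreover have "sum_system_dual {} I J a b = (I \<rightarrow>\<^sub>E (UNIV :: 'a set)) \<times> (J \<rightarrow>\<^sub>E (UNIV :: 'a set))"
    unfolding sum_system_dual_def by auto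
  ultimately show ?case
    using empty.prems by (simp add: card_funcsetE card_cartesian_product power_add)
next
  case (insert e0 E)
  let ?q = "CARD('a)" and ?Dual = "\<lambda>E. sum_system_dual E I J a b :: (('i \<Rightarrow> 'a) \<times> ('j \<Rightarrow> 'a)) set"
  define Sol where "Sol w = sum_system_solutions E I J a b (y(a e0 := y (a e0) - w)) (z(b e0 := z (b e0) - w))" for w
  have IH: "card (Sol w) * ?q ^ (card I + card J) \<le> ?q ^ card E * card (?Dual E)" for w
    unfolding Sol_def by (rule insert.IH) (use insert.prems in auto)
  have split: "card (sum_system_solutions (insert e0 E) I J a b y z) \<le> (\<Sum>w\<in>UNIV. card (Sol w))"
    unfolding Sol_def by (rule card_sum_system_solutions_insert_le[OF insert.hyps])
  show ?case
  proof (cases "\<forall>l\<in>?Dual E. fst l (a e0) = snd l (b e0)")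
    case True
    then have "?Dual (insert e0 E) = ?Dual E" by (auto simp: sum_system_dual_insert)
    moreover have "(\<Sum>w\<in>UNIV. card (Sol w)) * ?q ^ (card I + card J) \<le> (\<Sum>w\<in>(UNIV :: 'a set). ?q ^ card E * card (?Dual E))"
      unfolding sum_distrib_right by (intro sum_mono IH)
    ultimately show ?thesis
      using insert.hyps order_trans[OF mult_right_mono[OF split]] by simp
  next
    case False
    then obtain \<alpha>0 \<gamma>0 where l0: "(\<alpha>0, \<gamma>0) \<in> ?Dual E" and ne: "\<alpha>0 (a e0) \<noteq> \<gamma>0 (b e0)" by auto
    have shift_unique: "w = w'" if "t \<in> Sol w" "t' \<in> Sol w'" for t t' w w'
      using sum_system_solutions_shift_unique[OF insert.hyps(1) insert.prems l0 ne] that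
      unfolding Sol_def by blast
    have "(\<Sum>w\<in>UNIV. card (Sol w)) * ?q ^ (card I + card J) \<le> ?q ^ card E * card (?Dual E)"
    proof (cases "\<exists>w. Sol w \<noteq> {}")
      case True
      then obtain w1 where "Sol w1 \<noteq> {}" by auto
      then have "(\<Sum>w\<in>UNIV. card (Sol w)) = (\<Sum>w\<in>{w1}. card (Sol w))"
        by (intro sum.mono_neutral_right) (use shift_unique in \<open>auto simp: card_gt_0_iff\<close>)
      then show ?thesis using IH by simp
    qed simp
    also have "\<dots> \<le> ?q ^ card E * (card (?Dual (insert e0 E)) * ?q)"
      using card_sum_system_dual_le_insert[OF insert.prems(1-4) l0 ne] by simp
    finally show ?thesis
      using insert.hyps order_trans[OF mult_right_mono[OF split]] by (simp add: algebra_simps)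
  qed
qed

section \<open>Fibres and multinomial coefficients\<close>

lemma card_fibres_bij_betw:
  assumes "bij_betw f S S'" "\<forall>p\<in>S. F (f p) = G p"
  shows "card {u\<in>S'. F u = v} = card {p\<in>S. G p = v}"
proof -
  have "f ` {p\<in>S. G p = v} = {u\<in>S'. F u = v}"
    using assms by (force simp: bij_betw_def)
  moreover have "inj_on f {p\<in>S. G p = v}"
    using assms(1) by (auto simp: bij_betw_def inj_on_def)
  ultimately show ?thesis by (metis card_image)
qed

lemma sum_card_fibres:
  fixes g :: "'e \<Rightarrow> 'v::finite"
  assumes "finite S"
  shows "(\<Sum>v\<in>UNIV. card {p\<in>S. g p = v}) = card S"
  using sum.group[of S UNIV g "\<lambda>_. 1::nat"] assms by simp

lemma prod_fact_card_fibres_insert: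
  fixes G :: "'e \<Rightarrow> 'v::finite"
  assumes "finite S" "p0 \<notin> S"
  shows "(\<Prod>v\<in>UNIV. fact (card {p\<in>insert p0 S. G p = v}) :: nat)
           = Suc (card {p\<in>S. G p = G p0}) * (\<Prod>v\<in>UNIV. fact (card {p\<in>S. G p = v}))"
proof -
  have fibre: "{p\<in>insert p0 S. G p = v} = (if v = G p0 then insert p0 {p\<in>S. G p = v} else {p\<in>S. G p = v})" for v
    by auto
  have "(\<Prod>v\<in>UNIV. fact (card {p\<in>insert p0 S. G p = v}) :: nat)
      = fact (card {p\<in>insert p0 S. G p = G p0}) * (\<Prod>v\<in>UNIV - {G p0}. fact (card {p\<in>insert p0 S. G p = v}))"
    by (rule prod.remove) auto
  also have "\<dots> = fact (Suc (card {p\<in>S. G p = G p0})) * (\<Prod>v\<in>UNIV - {G p0}. fact (card {p\<in>S. G p = v}))"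
    using assms by (intro arg_cong2[where f="(*)"] prod.cong) (simp_all only: fibre, simp_all)
  also have "\<dots> = Suc (card {p\<in>S. G p = G p0}) * (\<Prod>v\<in>UNIV. fact (card {p\<in>S. G p = v}))"
    by (simp add: prod.remove[of UNIV "G p0"] algebra_simps)
  finally show ?thesis .
qed

lemma sum_pairs_same_image:
  fixes h :: "'a \<Rightarrow> 'z" and f :: "'z \<Rightarrow> 'b::comm_semiring_1"
  assumes "finite A"
  shows "(\<Sum>a\<in>A. \<Sum>b\<in>A. if h a = h b then f (h b) else 0)
           = (\<Sum>z\<in>h ` A. of_nat (card {a\<in>A. h a = z}) ^ 2 * f z)"
proof -
  have inner: "(\<Sum>b\<in>A. if h a = h b then f (h b) else 0) = of_nat (card {b\<in>A. h b = h a}) * f (h a)" for a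
  proof -
    have "(\<Sum>b\<in>A. if h a = h b then f (h b) else 0) = (\<Sum>b\<in>A. if h b = h a then f (h a) else 0)"
      by (rule sum.cong) auto
    also have "\<dots> = (\<Sum>b\<in>{b\<in>A. h b = h a}. f (h a))"
      using sum.inter_filter[OF assms, of "\<lambda>_. f (h a)" "\<lambda>b. h b = h a"] by simp
    finally show ?thesis by simp
  qed
  have "(\<Sum>a\<in>A. of_nat (card {b\<in>A. h b = h a}) * f (h a))
      = (\<Sum>z\<in>h ` A. \<Sum>a\<in>{a\<in>A. h a = z}. of_nat (card {b\<in>A. h b = z}) * f z)"
    using assms by (subst sum.image_gen[of A _ h]) (auto intro!: sum.cong)
  also have "\<dots> = (\<Sum>z\<in>h ` A. of_nat (card {a\<in>A. h a = z}) ^ 2 * f z)"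
    by (simp add: power2_eq_square mult.assoc)
  finally show ?thesis by (simp add: inner)
qed

definition fibre_bijections :: "'e set \<Rightarrow> 'f set \<Rightarrow> ('f \<Rightarrow> 'v) \<Rightarrow> ('e \<Rightarrow> 'v) \<Rightarrow> ('e \<Rightarrow> 'f) set" where
  "fibre_bijections S S' F G = {f \<in> S \<rightarrow>\<^sub>E S'. bij_betw f S S' \<and> (\<forall>p\<in>S. F (f p) = G p)}"

lemma fibre_bijections_restrict:
  assumes "p0 \<notin> S" and f: "f \<in> fibre_bijections (insert p0 S) S' F G"
  shows "F (f p0) = G p0 \<and> f p0 \<in> S' \<and> restrict f S \<in> fibre_bijections S (S' - {f p0}) F G"
proof -
  have bij: "bij_betw f (insert p0 S) S'" and fib: "\<forall>p\<in>insert p0 S. F (f p) = G p"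
    using f unfolding fibre_bijections_def by auto
  have "bij_betw f S (S' - {f p0})"
    using bij_betw_DiffI[OF bij, of "{p0}" "{f p0}"] assms(1) bij by (auto simp: bij_betw_def)
  then have "bij_betw (restrict f S) S (S' - {f p0})"
    by (rule bij_betw_cong[THEN iffD1, rotated]) simp
  then show ?thesis
    using bij fib unfolding fibre_bijections_def by (auto simp: bij_betw_def)
qed

lemma card_fibre_bijections_le:
  fixes G :: "'e \<Rightarrow> 'v::finite"
  assumes "finite S" "finite S'"
  shows "card (fibre_bijections S S' F G) \<le> (\<Prod>v\<in>UNIV. fact (card {p\<in>S. G p = v}))"
  using assms
proof (induction S arbitrary: S' rule: finite_induct)
  case empty
  have "fibre_bijections {} S' F G \<subseteq> {\<lambda>_. undefined}"
    unfolding fibre_bijections_def by auto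
  from card_mono[OF _ this] have "card (fibre_bijections {} S' F G) \<le> 1"
    by simp
  then show ?case by simp
next
  case (insert p0 S)
  define U where "U = {u\<in>S'. F u = G p0}"
  show ?case
  proof (cases "fibre_bijections (insert p0 S) S' F G = {}")
    case False
    then obtain f0 where "f0 \<in> fibre_bijections (insert p0 S) S' F G" by auto
    then have "card U = card {p\<in>insert p0 S. G p = G p0}"
      unfolding U_def fibre_bijections_def by (intro card_fibres_bij_betw) auto
    also have "\<dots> = Suc (card {p\<in>S. G p = G p0})"
      using insert.hyps by (simp add: insert_compr[symmetric] Collect_conj_eq)
    finally have cardU: "card U = Suc (card {p\<in>S. G p = G p0})" .
    have "card (fibre_bijections (insert p0 S) S' F G) \<le> (\<Sum>u\<in>U. card (fibre_bijections S (S' - {u}) F G))"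
    proof (rule card_le_sum_restrict_insert)
      show "fibre_bijections (insert p0 S) S' F G \<subseteq> extensional (insert p0 S)"
        unfolding fibre_bijections_def by (auto simp: PiE_def)
      show "finite U" "finite (fibre_bijections S (S' - {u}) F G)" for u
        unfolding U_def fibre_bijections_def using insert.prems
        by (auto intro: finite_subset[OF _ finite_PiE[OF insert.hyps(1)]])
    qed (auto simp: U_def dest: fibre_bijections_restrict[OF insert.hyps(2)])
    also have "\<dots> \<le> (\<Sum>u\<in>U. \<Prod>v\<in>UNIV. fact (card {p\<in>S. G p = v}))"
      by (intro sum_mono insert.IH) (use insert.prems in auto)
    also have "\<dots> = (\<Prod>v\<in>UNIV. fact (card {p\<in>insert p0 S. G p = v}))"
      unfolding prod_fact_card_fibres_insert[OF insert.hyps] using cardU by simp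
    finally show ?thesis .
  qed simp
qed

definition fibre_size_functions :: "'e set \<Rightarrow> ('v \<Rightarrow> nat) \<Rightarrow> ('e \<Rightarrow> 'v) set" where
  "fibre_size_functions S s = {g \<in> S \<rightarrow>\<^sub>E UNIV. \<forall>v. card {p\<in>S. g p = v} = s v}"

lemma finite_fibre_size_functions [simp]:
  "finite S \<Longrightarrow> finite (fibre_size_functions S s :: ('e \<Rightarrow> 'v::finite) set)"
  unfolding fibre_size_functions_def by (rule finite_subset[OF _ finite_PiE]) auto

lemma fibre_size_functions_restrict:
  assumes "finite S" "p0 \<notin> S" and g: "g \<in> fibre_size_functions (insert p0 S) s"
  shows "0 < s (g p0) \<and> restrict g S \<in> fibre_size_functions S (s(g p0 := s (g p0) - 1))"
proof -
  have sizes: "card {p\<in>insert p0 S. g p = v} = s v" for v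
    using g unfolding fibre_size_functions_def by auto
  have "{p\<in>insert p0 S. g p = v} = (if g p0 = v then insert p0 {p\<in>S. g p = v} else {p\<in>S. g p = v})" for v
    by auto
  then have "card {p\<in>S. g p = v} = (if g p0 = v then s v - 1 else s v)" and "0 < s (g p0)" for v
    using sizes[of v] sizes[of "g p0"] assms(1,2) by (auto split: if_splits)
  moreover have "{p\<in>S. restrict g S p = v} = {p\<in>S. g p = v}" for v by auto
  ultimately show ?thesis
    unfolding fibre_size_functions_def by auto
qed

lemma prod_fact_decrement:
  fixes s :: "'v::finite \<Rightarrow> nat"
  assumes "0 < s v"
  shows "(\<Prod>w\<in>UNIV. fact (s w) :: nat) = s v * (\<Prod>w\<in>UNIV. fact ((s(v := s v - 1)) w))"
proof -
  have "(\<Prod>w\<in>UNIV - {v}. fact ((s(v := s v - 1)) w) :: nat) = (\<Prod>w\<in>UNIV - {v}. fact (s w))"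
    by (intro prod.cong) auto
  then show ?thesis
    using assms by (simp add: prod.remove[of UNIV v] fact_reduce[of "s v"])
qed

lemma card_fibre_size_functions_insert_le:
  fixes s :: "'v::finite \<Rightarrow> nat"
  assumes "finite S" "p0 \<notin> S"
  shows "card (fibre_size_functions (insert p0 S) s)
           \<le> (\<Sum>v\<in>{v. 0 < s v}. card (fibre_size_functions S (s(v := s v - 1))))"
proof (rule card_le_sum_restrict_insert)
  show "fibre_size_functions (insert p0 S) s \<subseteq> extensional (insert p0 S)"
    unfolding fibre_size_functions_def by (auto simp: PiE_def)
qed (use fibre_size_functions_restrict[OF assms] assms(1) in simp_all)

lemma card_fibre_size_functions_le:
  fixes s :: "'v::finite \<Rightarrow> nat" and S :: "'e set"
  assumes "finite S"
  shows "card (fibre_size_functions S s) * (\<Prod>v\<in>UNIV. fact (s v)) \<le> fact (card S)"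
  using assms
proof (induction S arbitrary: s rule: finite_induct)
  case empty
  show ?case
  proof (cases "fibre_size_functions ({} :: 'e set) s = {}")
    case False
    then have "s = (\<lambda>_. 0)"
      unfolding fibre_size_functions_def by auto
    moreover have "fibre_size_functions ({} :: 'e set) s \<subseteq> {\<lambda>_. undefined}"
      unfolding fibre_size_functions_def by auto
    from card_mono[OF _ this] have "card (fibre_size_functions ({} :: 'e set) s) \<le> 1"
      by simp
    ultimately show ?thesis by simp
  qed simp
next
  case (insert p0 S)
  define V where "V = {v. 0 < s v}"
  let ?s' = "\<lambda>v. s(v := s v - 1)"
  show ?case
  proof (cases "fibre_size_functions (insert p0 S) s = {}")
    case False
    then obtain g where "g \<in> fibre_size_functions (insert p0 S) s" by auto
    then have sum_s: "(\<Sum>v\<in>UNIV. s v) = card (insert p0 S)"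
      using sum_card_fibres[of "insert p0 S" g] insert.hyps unfolding fibre_size_functions_def by simp
    have "card (fibre_size_functions (insert p0 S) s) \<le> (\<Sum>v\<in>V. card (fibre_size_functions S (?s' v)))"
      unfolding V_def by (rule card_fibre_size_functions_insert_le[OF insert.hyps])
    then have "card (fibre_size_functions (insert p0 S) s) * (\<Prod>v\<in>UNIV. fact (s v))
        \<le> (\<Sum>v\<in>V. card (fibre_size_functions S (?s' v))) * (\<Prod>w\<in>UNIV. fact (s w))"
      by (rule mult_right_mono) simp
    also have "\<dots> = (\<Sum>v\<in>V. s v * (card (fibre_size_functions S (?s' v)) * (\<Prod>w\<in>UNIV. fact (?s' v w))))"
      unfolding sum_distrib_right
    proof (rule sum.cong)
      fix v assume "v \<in> V"
      then show "card (fibre_size_functions S (?s' v)) * (\<Prod>w\<in>UNIV. fact (s w))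
          = s v * (card (fibre_size_functions S (?s' v)) * (\<Prod>w\<in>UNIV. fact (?s' v w)))"
        using prod_fact_decrement[of s v] by (simp add: V_def)
    qed simp
    also have "\<dots> \<le> (\<Sum>v\<in>V. s v * fact (card S))"
      by (intro sum_mono mult_left_mono insert.IH) simp
    also have "\<dots> \<le> (\<Sum>v\<in>UNIV. s v) * fact (card S)"
      by (simp add: sum_distrib_right[symmetric] sum_mono2)
    finally show ?thesis
      using sum_s insert.hyps by simp
  qed simp
qed

lemma eq_if_sum_eq_off_point:
  fixes s1 s2 :: "'v::finite \<Rightarrow> 'a::cancel_comm_monoid_add"
  assumes "sum s1 UNIV = sum s2 UNIV" "\<And>v. v \<noteq> c \<Longrightarrow> s1 v = s2 v"
  shows "s1 = s2"
proof
  fix v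
  have "sum s1 (UNIV - {c}) = sum s2 (UNIV - {c})"
    using assms(2) by (intro sum.cong) auto
  then have "s1 c = s2 c"
    using assms(1) by (simp add: sum.remove[of UNIV c])
  then show "s1 v = s2 v"
    using assms(2) by (cases "v = c") auto
qed

text \<open>Dropping one point of the support, chosen by any rule \<open>pt\<close>, loses no information, because
  the sum of the histogram is fixed.\<close>
lemma inj_on_drop_support_point:
  fixes S :: "('v::finite \<Rightarrow> nat) set" and pt :: "'v set \<Rightarrow> 'v"
  assumes "\<forall>s\<in>S. sum s UNIV = n"
  shows "inj_on (\<lambda>s. ({v. s v \<noteq> 0}, restrict s ({v. s v \<noteq> 0} - {pt {v. s v \<noteq> 0}}))) S"
proof (rule inj_onI)
  fix s1 s2 assume s: "s1 \<in> S" "s2 \<in> S"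
    and eq: "({v. s1 v \<noteq> 0}, restrict s1 ({v. s1 v \<noteq> 0} - {pt {v. s1 v \<noteq> 0}}))
           = ({v. s2 v \<noteq> 0}, restrict s2 ({v. s2 v \<noteq> 0} - {pt {v. s2 v \<noteq> 0}}))"
  define K where "K = {v. s1 v \<noteq> 0}"
  have K2: "{v. s2 v \<noteq> 0} = K" using eq unfolding K_def by simp
  then have r: "restrict s1 (K - {pt K}) = restrict s2 (K - {pt K})"
    using eq unfolding K_def by simp
  have "s1 v = s2 v" if "v \<noteq> pt K" for v
  proof (cases "v \<in> K")
    case True
    then show ?thesis using fun_cong[OF r, of v] that by simp
  next
    case False
    moreover from False have "v \<notin> {v. s2 v \<noteq> 0}" unfolding K2 .
    ultimately show ?thesis unfolding K_def by simp
  qed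
  then show "s1 = s2"
    using s assms by (intro eq_if_sum_eq_off_point) auto
qed

lemma card_histograms_with_support_le:
  fixes S :: "('v::finite \<Rightarrow> nat) set"
  assumes "\<forall>s\<in>S. sum s UNIV = n" "1 \<le> k"
  shows "card {s\<in>S. card {v. s v \<noteq> 0} = k} \<le> (CARD('v) choose k) * n ^ (k - 1)"
proof -
  define pt where "pt K = (SOME v. v \<in> K)" for K :: "'v set"
  let ?code = "\<lambda>s. ({v. s v \<noteq> 0}, restrict s ({v. s v \<noteq> 0} - {pt {v. s v \<noteq> 0}}))"
  let ?Ks = "{K. K \<subseteq> (UNIV :: 'v set) \<and> card K = k}"
  have pt_in: "pt K \<in> K" if "K \<in> ?Ks" for K
    using that assms(2) unfolding pt_def by (auto simp: some_in_eq)
  have "inj_on ?code {s\<in>S. card {v. s v \<noteq> 0} = k}"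
    using inj_on_drop_support_point[OF assms(1)] by (rule inj_on_subset) auto
  then have "card {s\<in>S. card {v. s v \<noteq> 0} = k} \<le> card (SIGMA K:?Ks. (K - {pt K}) \<rightarrow>\<^sub>E {1..n})"
  proof (rule card_inj_on_le)
    show "?code ` {s\<in>S. card {v. s v \<noteq> 0} = k} \<subseteq> (SIGMA K:?Ks. (K - {pt K}) \<rightarrow>\<^sub>E {1..n})"
    proof (rule image_subsetI)
      fix s assume s: "s \<in> {s\<in>S. card {v. s v \<noteq> 0} = k}"
      then have "s v \<le> n" for v
        using assms(1) member_le_sum[of v UNIV s] by auto
      then have "restrict s ({v. s v \<noteq> 0} - {pt {v. s v \<noteq> 0}}) \<in> ({v. s v \<noteq> 0} - {pt {v. s v \<noteq> 0}}) \<rightarrow>\<^sub>E {1..n}"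
        by (simp only: restrict_PiE_iff) (auto simp: Suc_le_eq)
      then show "?code s \<in> (SIGMA K:?Ks. (K - {pt K}) \<rightarrow>\<^sub>E {1..n})"
        using s by simp
    qed
  qed (intro finite_SigmaI finite_PiE; simp)
  also have "\<dots> = (\<Sum>K\<in>?Ks. card ((K - {pt K}) \<rightarrow>\<^sub>E {1..n}))"
    by (intro card_SigmaI) (auto intro!: finite_PiE)
  also have "\<dots> = (\<Sum>K\<in>?Ks. n ^ (k - 1))"
    using pt_in by (intro sum.cong) (simp_all add: card_funcsetE)
  also have "\<dots> = (CARD('v) choose k) * n ^ (k - 1)"
    using n_subsets[of "UNIV :: 'v set" k] by simp
  finally show ?thesis .
qed

lemma sum_by_support_size_le:
  fixes S :: "('v::finite \<Rightarrow> nat) set" and g :: "nat \<Rightarrow> real"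
  assumes "finite S" "\<forall>s\<in>S. sum s UNIV = n" "\<forall>s\<in>S. 1 \<le> card {v. s v \<noteq> 0}" "\<forall>k. 0 \<le> g k"
  shows "(\<Sum>s\<in>S. g (card {v. s v \<noteq> 0})) \<le> (\<Sum>k\<in>{1..CARD('v)}. real ((CARD('v) choose k) * n ^ (k - 1)) * g k)"
proof -
  have "(\<Sum>s\<in>S. g (card {v. s v \<noteq> 0})) = (\<Sum>k\<in>{1..CARD('v)}. \<Sum>s\<in>{s\<in>S. card {v. s v \<noteq> 0} = k}. g (card {v. s v \<noteq> 0}))"
  proof (rule sum.group[symmetric])
    show "finite S" by (rule assms(1))
    show "finite {1..CARD('v)}" by simp
    show "(\<lambda>s. card {v. s v \<noteq> 0}) ` S \<subseteq> {1..CARD('v)}"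
    proof
      fix k assume "k \<in> (\<lambda>s. card {v. s v \<noteq> 0}) ` S"
      then obtain s where "s \<in> S" "k = card {v. s v \<noteq> 0}" by auto
      moreover have "card {v. s v \<noteq> 0} \<le> CARD('v)" by (rule card_mono) auto
      ultimately show "k \<in> {1..CARD('v)}" using assms(3) by auto
    qed
  qed
  also have "\<dots> = (\<Sum>k\<in>{1..CARD('v)}. real (card {s\<in>S. card {v. s v \<noteq> 0} = k}) * g k)"
    by (rule sum.cong) simp_all
  also have "\<dots> \<le> (\<Sum>k\<in>{1..CARD('v)}. real ((CARD('v) choose k) * n ^ (k - 1)) * g k)"
  proof (rule sum_mono)
    fix k assume "k \<in> {1..CARD('v)}"
    then have "card {s\<in>S. card {v. s v \<noteq> 0} = k} \<le> (CARD('v) choose k) * n ^ (k - 1)"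
      using card_histograms_with_support_le[OF assms(2)] by simp
    then have "real (card {s\<in>S. card {v. s v \<noteq> 0} = k}) \<le> real ((CARD('v) choose k) * n ^ (k - 1))"
      by (simp only: of_nat_le_iff)
    then show "real (card {s\<in>S. card {v. s v \<noteq> 0} = k}) * g k \<le> real ((CARD('v) choose k) * n ^ (k - 1)) * g k"
      by (rule mult_right_mono) (use assms(4) in auto)
  qed
  finally show ?thesis .
qed

section \<open>Factorial inequalities\<close>

text \<open>That is, \<open>C(a+A, a) C(b+B, b) \<le> C(a+b+A+B, a+b)\<close>: one term of Vandermonde's convolution.\<close>
lemma fact_binomial_product_le:
  "fact (a+A) * fact (b+B) * fact (a+b) * fact (A+B) \<le> fact (a+b+A+B) * fact a * fact b * fact A * (fact B :: nat)"
proof -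
  define X where "X = (a+A) choose a"
  define Y where "Y = (b+B) choose b"
  define Z where "Z = (a+A+(b+B)) choose (a+b)"
  have XY: "X * Y \<le> Z"
  proof -
    have "X * Y = ((a+A) choose a) * ((b+B) choose (a+b-a))" unfolding X_def Y_def by simp
    also have "\<dots> \<le> (\<Sum>k\<le>a+b. ((a+A) choose k) * ((b+B) choose (a+b-k)))"
      by (rule member_le_sum[where f="\<lambda>k. ((a+A) choose k) * ((b+B) choose (a+b-k))"]) auto
    also have "\<dots> = Z" unfolding Z_def by (rule vandermonde)
    finally show ?thesis .
  qed
  have fX: "fact a * fact A * X = fact (a+A)" using binomial_fact_lemma[of a "a+A"] unfolding X_def by simp
  have fY: "fact b * fact B * Y = fact (b+B)" using binomial_fact_lemma[of b "b+B"] unfolding Y_def by simp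
  have fZ: "fact (a+b) * fact (A+B) * Z = fact (a+b+A+B)"
  proof -
    have "a+A+(b+B) - (a+b) = A+B" "a+A+(b+B) = a+b+A+B" by simp_all
    then show ?thesis using binomial_fact_lemma[of "a+b" "a+A+(b+B)"] unfolding Z_def by (simp add: ac_simps)
  qed
  have "fact (a+A) * fact (b+B) * fact (a+b) * fact (A+B) = (fact a * fact A * fact b * fact B * fact (a+b) * fact (A+B)) * (X * Y)"
    unfolding fX[symmetric] fY[symmetric] by (simp add: algebra_simps)
  also have "\<dots> \<le> (fact a * fact A * fact b * fact B * fact (a+b) * fact (A+B)) * Z"
    using XY by (rule mult_left_mono) simp
  also have "\<dots> = fact (a+b+A+B) * fact a * fact b * fact A * fact B"
    unfolding fZ[symmetric] by (simp add: algebra_simps)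
  finally show ?thesis .
qed

lemma fact_sum_prod_fact_le:
  fixes s s' :: "'v \<Rightarrow> nat"
  shows "finite V \<Longrightarrow> fact (sum s V) * fact (sum s' V) * (\<Prod>v\<in>V. fact (s v + s' v))
     \<le> fact (sum (\<lambda>v. s v + s' v) V) * (\<Prod>v\<in>V. fact (s v)) * (\<Prod>v\<in>V. fact (s' v) :: nat)"
proof (induction V rule: finite_induct)
  case empty then show ?case by simp
next
  case (insert w V)
  define a where "a = s w"
  define b where "b = s' w"
  define A where "A = sum s V"
  define B where "B = sum s' V"
  define R where "R = (\<Prod>v\<in>V. fact (s v + s' v) :: nat)"
  define P where "P = (\<Prod>v\<in>V. fact (s v) :: nat)"
  define P' where "P' = (\<Prod>v\<in>V. fact (s' v) :: nat)"
  have IH: "fact A * fact B * R \<le> fact (A+B) * P * P'"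
    using insert.IH unfolding A_def B_def R_def P_def P'_def by (simp add: sum.distrib)
  have bp: "fact (a+A) * fact (b+B) * fact (a+b) * fact (A+B) \<le> fact (a+b+A+B) * fact a * fact b * fact A * (fact B :: nat)"
    by (rule fact_binomial_product_le)
  have "(fact (a+A) * fact (b+B) * (fact (a+b) * R)) * (fact (A+B) * fact A * fact B)
      = (fact (a+A) * fact (b+B) * fact (a+b) * fact (A+B)) * (fact A * fact B * R)" by (simp add: algebra_simps)
  also have "\<dots> \<le> (fact (a+b+A+B) * fact a * fact b * fact A * fact B) * (fact (A+B) * P * P')"
    by (rule mult_mono[OF bp IH]) simp_all
  also have "\<dots> = (fact (a+b+A+B) * (fact a * P) * (fact b * P')) * (fact (A+B) * fact A * fact B)"
    by (simp add: algebra_simps)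
  finally have "fact (a+A) * fact (b+B) * (fact (a+b) * R) \<le> fact (a+b+A+B) * (fact a * P) * (fact b * P')"
    by (rule mult_right_le_imp_le) simp
  then show ?case using insert.hyps
    unfolding a_def b_def A_def B_def R_def P_def P'_def by (simp add: sum.distrib algebra_simps)
qed

lemma fact_power_prod_fact_mult_le:
  fixes s :: "'v \<Rightarrow> nat"
  assumes "finite V"
  shows "fact (sum s V) ^ m * (\<Prod>v\<in>V. fact (m * s v)) \<le> (fact (m * sum s V) * (\<Prod>v\<in>V. fact (s v)) ^ m :: nat)"
proof (induction m)
  case 0 then show ?case by simp
next
  case (Suc m)
  define n where "n = sum s V"
  define P where "P = (\<Prod>v\<in>V. fact (s v) :: nat)"
  have sm: "fact (sum s V) * fact (sum (\<lambda>v. m * s v) V) * (\<Prod>v\<in>V. fact (s v + m * s v))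
     \<le> fact (sum (\<lambda>v. s v + m * s v) V) * (\<Prod>v\<in>V. fact (s v)) * (\<Prod>v\<in>V. fact (m * s v) :: nat)"
    by (rule fact_sum_prod_fact_le[OF assms])
  have e1: "sum (\<lambda>v. m * s v) V = m * n" unfolding n_def by (simp add: sum_distrib_left)
  have e2: "sum (\<lambda>v. s v + m * s v) V = Suc m * n" unfolding n_def by (simp add: sum.distrib sum_distrib_left)
  have e3: "(\<Prod>v\<in>V. fact (s v + m * s v)) = (\<Prod>v\<in>V. fact (Suc m * s v) :: nat)" by simp
  have sm': "fact n * fact (m * n) * (\<Prod>v\<in>V. fact (Suc m * s v)) \<le> fact (Suc m * n) * P * (\<Prod>v\<in>V. fact (m * s v) :: nat)"
    using sm unfolding e1 e2 e3 n_def[symmetric] P_def .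
  have IH: "fact n ^ m * (\<Prod>v\<in>V. fact (m * s v)) \<le> fact (m * n) * P ^ m"
    using Suc.IH unfolding n_def P_def .
  have "(fact n ^ Suc m * (\<Prod>v\<in>V. fact (Suc m * s v))) * fact (m * n)
      = fact n ^ m * (fact n * fact (m * n) * (\<Prod>v\<in>V. fact (Suc m * s v)))" by (simp add: algebra_simps)
  also have "\<dots> \<le> fact n ^ m * (fact (Suc m * n) * P * (\<Prod>v\<in>V. fact (m * s v)))"
    by (rule mult_left_mono[OF sm']) simp
  also have "\<dots> = (fact n ^ m * (\<Prod>v\<in>V. fact (m * s v))) * (fact (Suc m * n) * P)" by (simp add: algebra_simps)
  also have "\<dots> \<le> (fact (m * n) * P ^ m) * (fact (Suc m * n) * P)"
    by (rule mult_right_mono[OF IH]) simp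
  also have "\<dots> = (fact (Suc m * n) * P ^ Suc m) * fact (m * n)" by (simp add: algebra_simps)
  finally have "fact n ^ Suc m * (\<Prod>v\<in>V. fact (Suc m * s v)) \<le> fact (Suc m * n) * P ^ Suc m"
    by (rule mult_right_le_imp_le) simp
  then show ?case unfolding n_def P_def .
qed

lemma fact_mult_fact_Suc_le: "1 \<le> a \<Longrightarrow> fact a * fact (Suc b) \<le> (fact (a + b) :: nat)"
proof (induction b)
  case 0 then show ?case by simp
next
  case (Suc b)
  have "fact a * fact (Suc (Suc b)) = Suc (Suc b) * (fact a * fact (Suc b) :: nat)" by (simp add: algebra_simps)
  also have "\<dots> \<le> Suc (Suc b) * fact (a + b)" using Suc by (intro mult_left_mono) simp_all
  also have "\<dots> \<le> Suc (a + b) * fact (a + b)" using Suc.prems by (intro mult_right_mono) auto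
  also have "\<dots> = fact (a + Suc b)" by simp
  finally show ?case .
qed

lemma fact_mult_fact_le: "1 \<le> a \<Longrightarrow> 1 \<le> b \<Longrightarrow> fact a * fact b \<le> (fact (a + b - 1) :: nat)"
  using fact_mult_fact_Suc_le[of a "b - 1"] by simp

lemma prod_fact_le_fact_sum:
  fixes s :: "'v \<Rightarrow> nat"
  assumes "finite K" "K \<noteq> {}" "\<forall>v\<in>K. 1 \<le> s v"
  shows "(\<Prod>v\<in>K. fact (s v)) \<le> (fact (sum s K + 1 - card K) :: nat)"
  using assms
proof (induction K rule: finite_ne_induct)
  case (insert w K)
  have K_le: "card K \<le> sum s K"
    using sum_bounded_below[of K 1 s] insert.prems by simp
  have "(\<Prod>v\<in>insert w K. fact (s v)) = fact (s w) * (\<Prod>v\<in>K. fact (s v) :: nat)"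
    using insert.hyps by simp
  also have "\<dots> \<le> fact (s w) * fact (sum s K + 1 - card K)"
    using insert.IH insert.prems by simp
  also have "\<dots> \<le> fact (s w + (sum s K + 1 - card K) - 1)"
    by (rule fact_mult_fact_le) (use insert.prems K_le in auto)
  also have "s w + (sum s K + 1 - card K) - 1 = sum s (insert w K) + 1 - card (insert w K)"
    using insert.hyps K_le by simp
  finally show ?case .
qed simp

lemma fact_eq_fact_mult_falling: "j \<le> n \<Longrightarrow> fact n = fact (n - j) * (\<Prod>i<j. n - i :: nat)"
proof (induction j)
  case 0 then show ?case by simp
next
  case (Suc j)
  have "fact (n - j) = (n - j) * fact (n - Suc j)" using Suc.prems by (simp add: fact_reduce)
  then show ?case using Suc by (simp add: algebra_simps)
qed

lemma power_le_falling_sq: "j < n \<Longrightarrow> n ^ j \<le> (\<Prod>i<j. n - i :: nat) ^ 2"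
proof -
  assume jn: "j < n"
  have "(\<Prod>i<j. n - i :: nat) ^ 2 = (\<Prod>i<j. n - i) * (\<Prod>i<j. n - (j - Suc i))"
    using prod.nat_diff_reindex[where g="\<lambda>i. n - i" and n=j] by (simp add: power2_eq_square)
  also have "\<dots> = (\<Prod>i<j. (n - i) * (n - (j - Suc i)))" by (simp add: prod.distrib)
  also have "\<dots> \<ge> (\<Prod>i<j. n)"
  proof (rule prod_mono)
    fix i assume "i \<in> {..<j}"
    then have i: "i < j" by simp
    define x where "x = n - i"
    define y where "y = n - (j - Suc i)"
    have "2 \<le> x" "2 \<le> y" "x + y \<ge> n" using i jn unfolding x_def y_def by auto
    moreover have "x * y \<ge> 2 * x" "x * y \<ge> 2 * y" using \<open>2 \<le> x\<close> \<open>2 \<le> y\<close> by simp_all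
    ultimately have "x * y \<ge> n" by linarith
    then show "0 \<le> n \<and> n \<le> (n - i) * (n - (j - Suc i))" unfolding x_def y_def by simp
  qed
  finally show ?thesis by simp
qed

lemma falling_fact_sq_ge:
  assumes "j < n"
  shows "real n ^ j \<le> (fact n / fact (n - j)) ^ 2"
proof -
  have "fact n / fact (n - j) = real (\<Prod>i<j. n - i)"
    using arg_cong[OF fact_eq_fact_mult_falling[of j n], of real] assms by simp
  then show ?thesis
    using power_le_falling_sq[OF assms] by (metis of_nat_le_iff of_nat_power)
qed

lemma inverse_power_le_powr:
  fixes n F :: real and j m :: nat
  assumes "0 < n" "0 < F" "n ^ j \<le> F ^ 2"
  shows "1 / F ^ (m - 2) \<le> (n ^ 2 / (n / 2) ^ (m - 2)) powr (real j / 2) / n ^ j"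
proof -
  define r where "r = n ^ 2 / (n / 2) ^ (m - 2)"
  have "(n / 2) ^ j \<le> n ^ j" using assms(1) by (intro power_mono) auto
  then have "((n / 2) ^ j) ^ (m - 2) \<le> (F ^ 2) ^ (m - 2)"
    using assms(1,3) by (intro power_mono) auto
  then have "(n ^ j) ^ 2 / (F ^ 2) ^ (m - 2) \<le> (n ^ j) ^ 2 / ((n / 2) ^ j) ^ (m - 2)"
    using assms(1,2) by (intro divide_left_mono) auto
  then have "(n ^ j / F ^ (m - 2)) ^ 2 \<le> r ^ j"
    unfolding r_def power_divide by (simp add: mult.commute flip: power_mult)
  then have "n ^ j / F ^ (m - 2) \<le> sqrt (r ^ j)"
    by (rule real_le_rsqrt)
  also have "sqrt (r ^ j) = r powr (real j / 2)"
  proof -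
    have "0 < r" unfolding r_def using assms(1) by simp
    then show ?thesis by (simp add: powr_half_sqrt[symmetric] powr_realpow[symmetric] powr_powr)
  qed
  finally have le: "n ^ j / F ^ (m - 2) \<le> r powr (real j / 2)" .
  have "1 / F ^ (m - 2) = (n ^ j / F ^ (m - 2)) / n ^ j"
    using assms(1) by simp
  also have "\<dots> \<le> r powr (real j / 2) / n ^ j"
    using le by (rule divide_right_mono) (use assms(1) in simp)
  finally show ?thesis unfolding r_def .
qed

text \<open>The contribution of one histogram class to the second moment: \<open>D\<close> counts the labellings
  with the class's histogram, \<open>Q = \<Prod>\<^sub>v s\<^sub>v!\<close> and \<open>c = \<Prod>\<^sub>v (m s\<^sub>v)! / (mn)!\<close>;
  \<open>k\<close> is the number of labels that occur.\<close>
lemma histogram_term_le: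
  fixes n m k :: nat and D Q c :: real
  assumes "1 \<le> k" "k \<le> n" "2 \<le> m" "0 \<le> D" "0 < Q" "D * Q \<le> fact n"
    and "0 \<le> c" "c \<le> (Q / fact n) ^ m" "Q \<le> fact (n + 1 - k)"
  shows "D\<^sup>2 * c \<le> (real n ^ 2 / (real n / 2) ^ (m - 2)) powr (real (k - 1) / 2) / real n ^ (k - 1)"
proof -
  define M where "M = fact n / Q"
  define F :: real where "F = fact n / fact (n - (k - 1))"
  have M_pos: "0 < M" unfolding M_def using assms(5) by simp
  have D_le: "D \<le> M" unfolding M_def using assms(5,6) by (simp add: field_simps)
  have c_le: "c \<le> (1 / M) ^ m" unfolding M_def using assms(8) by simp
  have F_le: "F \<le> M"
    unfolding M_def F_def using assms(1,2,5,9)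
    by (intro divide_left_mono) (auto simp: Suc_diff_le)
  have F_pos: "0 < F" unfolding F_def by simp
  have "D\<^sup>2 * c \<le> M\<^sup>2 * (1 / M) ^ m"
    using assms(4,7) M_pos D_le c_le by (intro mult_mono power_mono) auto
  also have "\<dots> = 1 / M ^ (m - 2)"
  proof -
    have "m = (m - 2) + 2" using assms(3) by simp
    then have "M ^ m = M ^ (m - 2) * M\<^sup>2" by (metis power_add)
    then show ?thesis using M_pos by (simp add: power_one_over)
  qed
  also have "\<dots> \<le> 1 / F ^ (m - 2)"
    using F_pos F_le by (intro divide_left_mono power_mono) auto
  also have "\<dots> \<le> (real n ^ 2 / (real n / 2) ^ (m - 2)) powr (real (k - 1) / 2) / real n ^ (k - 1)"
    using assms(1,2) F_pos falling_fact_sq_ge[of "k - 1" n] unfolding F_def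
    by (intro inverse_power_le_powr) auto
  finally show ?thesis .
qed

section \<open>Blocks of a permutation\<close>

lemma inj_on_restrict_permutes: "inj_on (\<lambda>\<pi>. restrict \<pi> S) {\<pi>. \<pi> permutes S}"
proof (rule inj_onI)
  fix \<pi>1 \<pi>2 assume p: "\<pi>1 \<in> {\<pi>. \<pi> permutes S}" "\<pi>2 \<in> {\<pi>. \<pi> permutes S}"
    and eq: "restrict \<pi>1 S = restrict \<pi>2 S"
  from p have "\<pi>1 permutes S" "\<pi>2 permutes S" by auto
  show "\<pi>1 = \<pi>2"
  proof
    fix u show "\<pi>1 u = \<pi>2 u"
      using fun_cong[OF eq, of u] permutes_not_in[OF \<open>\<pi>1 permutes S\<close>, of u]
        permutes_not_in[OF \<open>\<pi>2 permutes S\<close>, of u] by (cases "u \<in> S") auto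
  qed
qed

lemma div_eq_iff_mem_interval:
  fixes m p i :: nat
  assumes "0 < m"
  shows "p div m = i \<longleftrightarrow> p \<in> {m * i..<m * i + m}"
proof
  assume "p div m = i"
  then show "p \<in> {m * i..<m * i + m}"
    using assms div_times_less_eq_dividend[of m p] dividend_less_times_div[OF assms, of p]
    by (auto simp: mult.commute)
next
  assume "p \<in> {m * i..<m * i + m}"
  then show "p div m = i" using div_nat_eqI[of m i p] by (simp add: mult.commute)
qed

lemma interval_block_subset:
  fixes m n i :: nat
  assumes "i < n"
  shows "{m * i..<m * i + m} \<subseteq> {..<m * n}"
proof -
  have "m * i + m \<le> m * n" using assms mult_le_mono2[of "Suc i" n m] by simp
  then show ?thesis by auto
qed

lemma card_div_filter:
  fixes m n :: nat
  assumes "0 < m"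
  shows "card {p\<in>{..<m * n}. P (p div m)} = m * card {i\<in>{..<n}. P i}"
proof -
  have mem: "p \<in> {m * i..<m * i + m} \<longleftrightarrow> p div m = i" for p i
    using div_eq_iff_mem_interval[OF assms] by blast
  have lt: "p \<in> {..<m * n} \<longleftrightarrow> p div m < n" for p
    using assms by (simp add: div_less_iff_less_mult mult.commute)
  have "{p\<in>{..<m * n}. P (p div m)} = (\<Union>i\<in>{i\<in>{..<n}. P i}. {m * i..<m * i + m})"
    unfolding set_eq_iff UN_iff mem lt by auto
  also have "card \<dots> = (\<Sum>i\<in>{i\<in>{..<n}. P i}. card {m * i..<m * i + m})"
    by (intro card_UN_disjoint) (auto simp only: mem, simp_all)
  finally show ?thesis by simp
qed

text \<open>Block \<open>i\<close> of \<open>Y\<^sub>t\<^sub>,\<^sub>\<pi>\<close> consists of the coordinates \<open>\<pi> (m i + j)\<close>, \<open>j < m\<close>;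
  so coordinate \<open>u\<close> lies in block \<open>inv \<pi> u div m\<close>.\<close>
definition block :: "nat \<Rightarrow> (nat \<Rightarrow> nat) \<Rightarrow> nat \<Rightarrow> nat" where
  "block m \<pi> u = inv \<pi> u div m"

lemma block_fibre_eq_image:
  assumes "\<pi> permutes {..<m * n}" "i < n" "0 < m"
  shows "{u\<in>{..<m * n}. block m \<pi> u = i} = \<pi> ` {m * i..<m * i + m}"
proof -
  have "\<pi> ` {p\<in>{..<m * n}. p div m = i} = {u. inv \<pi> u \<in> {..<m * n} \<and> inv \<pi> u div m = i}"
    using permutes_bij[OF assms(1)] by (rule bij_image_Collect_eq)
  also have "\<dots> = {u\<in>{..<m * n}. block m \<pi> u = i}"
    unfolding block_def using permutes_in_image[OF permutes_inv[OF assms(1)]] by auto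
  finally have "{u\<in>{..<m * n}. block m \<pi> u = i} = \<pi> ` {p\<in>{..<m * n}. p div m = i}" ..
  also have "{p\<in>{..<m * n}. p div m = i} = {m * i..<m * i + m}"
    using interval_block_subset[OF assms(2), of m] assms(3) by (auto simp: div_eq_iff_mem_interval)
  finally show ?thesis .
qed

lemma sum_block_eq:
  fixes t :: "nat \<Rightarrow> 'a::comm_monoid_add"
  assumes "\<pi> permutes {..<m * n}" "i < n"
  shows "(\<Sum>j<m. t (\<pi> (m * i + j))) = (\<Sum>u\<in>{u\<in>{..<m * n}. block m \<pi> u = i}. t u)"
proof (cases "m = 0")
  case False
  have "(\<Sum>u\<in>\<pi> ` {m * i..<m * i + m}. t u) = (\<Sum>p\<in>{m * i..<m * i + m}. t (\<pi> p))"
    using permutes_inj[OF assms(1)] by (simp add: sum.reindex inj_on_subset[of _ UNIV])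
  also have "\<dots> = (\<Sum>j<m. t (\<pi> (m * i + j)))"
    using sum.shift_bounds_nat_ivl[of "\<lambda>p. t (\<pi> p)" 0 "m * i" m] by (simp add: atLeast0LessThan add.commute)
  finally show ?thesis
    using block_fibre_eq_image[OF assms] False by simp
qed simp

lemma card_block_fibre:
  assumes "\<pi> permutes {..<m * n}" "0 < m"
  shows "card {u\<in>{..<m * n}. P (block m \<pi> u)} = m * card {i\<in>{..<n}. P i}"
proof -
  have "bij_betw (inv \<pi>) {..<m * n} {..<m * n}"
    using assms(1) by (simp add: permutes_imp_bij permutes_inv)
  then have "card {p\<in>{..<m * n}. P (p div m) = True} = card {u\<in>{..<m * n}. P (inv \<pi> u div m) = True}"
    by (rule card_fibres_bij_betw) simp
  then show ?thesis using card_div_filter[OF assms(2)] by (simp add: block_def)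
qed

section \<open>The second moment\<close>

lemma perms_iff: "\<pi> \<in> perms N \<longleftrightarrow> \<pi> permutes {..<N}"
  unfolding perms_def by (simp add: atLeast0LessThan)

lemma finite_vecs_sum [simp]: "finite (vecs_sum N a)"
  unfolding vecs_sum_def by (rule finite_subset[OF _ finite_PiE[of "{0..<N}" "\<lambda>_. UNIV"]]) auto

lemma card_vecs_sum_ge:
  assumes "1 \<le> N"
  shows "CARD('a::{field,finite}) ^ (N - 1) \<le> card (vecs_sum N (a::'a))"
proof -
  define f where "f u = u(N - 1 := a - (\<Sum>j<N-1. u j))" for u :: "nat \<Rightarrow> 'a"
  have "card ({..<N-1} \<rightarrow>\<^sub>E (UNIV::'a set)) \<le> card (vecs_sum N a)"
  proof (rule card_inj_on_le[where f=f])
    show "finite (vecs_sum N a)" by simp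
    show "inj_on f ({..<N-1} \<rightarrow>\<^sub>E UNIV)"
    proof (rule inj_onI)
      fix u v assume u: "u \<in> {..<N-1} \<rightarrow>\<^sub>E (UNIV::'a set)" and v: "v \<in> {..<N-1} \<rightarrow>\<^sub>E (UNIV::'a set)" and "f u = f v"
      then have "\<forall>j. j \<noteq> N - 1 \<longrightarrow> u j = v j" unfolding f_def by (metis fun_upd_other)
      moreover have "u (N-1) = v (N-1)" using u v by (auto simp: PiE_iff extensional_def)
      ultimately show "u = v" by (metis ext)
    qed
    show "f ` ({..<N-1} \<rightarrow>\<^sub>E UNIV) \<subseteq> vecs_sum N a"
    proof
      fix w assume "w \<in> f ` ({..<N-1} \<rightarrow>\<^sub>E UNIV)"
      then obtain u where u: "u \<in> {..<N-1} \<rightarrow>\<^sub>E (UNIV::'a set)" and w: "w = f u" by auto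
      have ext: "w \<in> {0..<N} \<rightarrow>\<^sub>E UNIV" using u assms unfolding w f_def by (auto simp: PiE_iff extensional_def)
      have "{..<N} = insert (N-1) {..<N-1}" using assms by auto
      then have "(\<Sum>j<N. w j) = w (N-1) + (\<Sum>j<N-1. w j)" by simp
      also have "(\<Sum>j<N-1. w j) = (\<Sum>j<N-1. u j)" unfolding w f_def by (rule sum.cong) auto
      finally have "(\<Sum>j<N. w j) = a" unfolding w f_def by simp
      then show "w \<in> vecs_sum N a" using ext unfolding vecs_sum_def by simp
    qed
  qed
  then show ?thesis by (simp add: card_funcsetE)
qed

definition histogram :: "nat \<Rightarrow> (nat \<Rightarrow> 'a) \<Rightarrow> 'a \<Rightarrow> nat" where
  "histogram n \<alpha> v = card {i\<in>{..<n}. \<alpha> i = v}"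

text \<open>The pairs of agreeing labellings form the dual of the linear system
  \<open>Y\<^sub>t\<^sub>,\<^sub>\<pi> = Y\<^sub>t\<^sub>,\<^sub>\<pi>\<^sub>' = 1\<close>.\<close>
definition labellings_agree :: "nat \<Rightarrow> nat \<Rightarrow> (nat \<Rightarrow> nat) \<Rightarrow> (nat \<Rightarrow> nat) \<Rightarrow> (nat \<Rightarrow> 'a) \<Rightarrow> (nat \<Rightarrow> 'a) \<Rightarrow> bool" where
  "labellings_agree m N \<pi> \<pi>' \<alpha> \<gamma> \<longleftrightarrow> (\<forall>u<N. \<alpha> (block m \<pi> u) = \<gamma> (block m \<pi>' u))"

lemma fibre_size_functions_histogram:
  "fibre_size_functions {..<n} s = {\<alpha> \<in> {..<n} \<rightarrow>\<^sub>E UNIV. histogram n \<alpha> = s}"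
  unfolding fibre_size_functions_def histogram_def by (auto simp: fun_eq_iff)

lemma restrict_agreeing_perm:
  assumes "\<pi>' permutes {..<N}" "labellings_agree m N \<pi> \<pi>' \<alpha> \<gamma>"
  shows "restrict \<pi>' {..<N} \<in> fibre_bijections {..<N} {..<N} (\<lambda>u. \<alpha> (block m \<pi> u)) (\<lambda>p. \<gamma> (p div m))"
proof -
  have bij: "bij_betw (restrict \<pi>' {..<N}) {..<N} {..<N}"
    using permutes_imp_bij[OF assms(1)] by (rule bij_betw_cong[THEN iffD1, rotated]) simp
  have "\<alpha> (block m \<pi> (\<pi>' p)) = \<gamma> (p div m)" if "p < N" for p
    using assms(2) permutes_in_image[OF assms(1), of p] that
    unfolding labellings_agree_def block_def by (auto simp: permutes_inverses[OF assms(1)])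
  then show ?thesis
    using bij unfolding fibre_bijections_def by (auto simp: bij_betw_def)
qed

lemma agreeing_perm_histogram_eq:
  fixes \<alpha> \<gamma> :: "nat \<Rightarrow> 'a::finite"
  assumes "0 < m" "\<pi> permutes {..<m * n}" "\<pi>' permutes {..<m * n}"
    and "labellings_agree m (m * n) \<pi> \<pi>' \<alpha> \<gamma>"
  shows "histogram n \<alpha> = histogram n \<gamma>"
proof
  fix v
  let ?N = "m * n" and ?F = "\<lambda>u. \<alpha> (block m \<pi> u)" and ?G = "\<lambda>p. \<gamma> (p div m)"
  have "bij_betw (restrict \<pi>' {..<?N}) {..<?N} {..<?N}" "\<forall>p\<in>{..<?N}. ?F (restrict \<pi>' {..<?N} p) = ?G p"
    using restrict_agreeing_perm[OF assms(3,4)] unfolding fibre_bijections_def by auto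
  then have "card {u\<in>{..<?N}. ?F u = v} = card {p\<in>{..<?N}. ?G p = v}"
    by (rule card_fibres_bij_betw)
  then show "histogram n \<alpha> v = histogram n \<gamma> v"
    using card_block_fibre[OF assms(2,1), of "\<lambda>i. \<alpha> i = v"] card_div_filter[OF assms(1), of n "\<lambda>i. \<gamma> i = v"]
      assms(1) by (simp add: histogram_def)
qed

text \<open>Restricting \<open>\<pi>'\<close> to \<open>[mn]\<close> maps the agreeing permutations injectively into the bijections
  that carry block labels \<open>\<gamma>\<close> to labels \<open>\<alpha>\<close>.\<close>
lemma card_agreeing_perms_le:
  fixes \<alpha> \<gamma> :: "nat \<Rightarrow> 'a::finite"
  assumes "0 < m" "\<pi> permutes {..<m * n}"
  shows "card {\<pi>'\<in>perms (m * n). labellings_agree m (m * n) \<pi> \<pi>' \<alpha> \<gamma>}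
     \<le> (if histogram n \<alpha> = histogram n \<gamma> then \<Prod>v\<in>UNIV. fact (m * histogram n \<gamma> v) else 0)"
proof -
  let ?N = "m * n" and ?F = "\<lambda>u. \<alpha> (block m \<pi> u)" and ?G = "\<lambda>p. \<gamma> (p div m)"
  let ?Z = "{\<pi>'\<in>perms ?N. labellings_agree m ?N \<pi> \<pi>' \<alpha> \<gamma>}"
  have "inj_on (\<lambda>\<pi>'. restrict \<pi>' {..<?N}) ?Z"
    by (rule inj_on_subset[OF inj_on_restrict_permutes]) (auto simp: perms_iff)
  then have "card ?Z \<le> card (fibre_bijections {..<?N} {..<?N} ?F ?G)"
  proof (rule card_inj_on_le)
    show "(\<lambda>\<pi>'. restrict \<pi>' {..<?N}) ` ?Z \<subseteq> fibre_bijections {..<?N} {..<?N} ?F ?G"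
      using restrict_agreeing_perm by (auto simp: perms_iff)
    show "finite (fibre_bijections {..<?N} {..<?N} ?F ?G)"
      unfolding fibre_bijections_def by (rule finite_subset[OF _ finite_PiE[of "{..<?N}" "\<lambda>_. {..<?N}"]]) auto
  qed
  also have "\<dots> \<le> (\<Prod>v\<in>UNIV. fact (m * histogram n \<gamma> v))"
  proof -
    have "card {p\<in>{..<?N}. ?G p = v} = m * histogram n \<gamma> v" for v
      unfolding histogram_def by (rule card_div_filter[OF assms(1)])
    then show ?thesis using card_fibre_bijections_le[of "{..<?N}" "{..<?N}" ?F ?G] by simp
  qed
  finally have card_Z: "card ?Z \<le> (\<Prod>v\<in>UNIV. fact (m * histogram n \<gamma> v))" .
  show ?thesis
  proof (cases "histogram n \<alpha> = histogram n \<gamma>")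
    case False
    then have Z: "?Z = {}" using agreeing_perm_histogram_eq[OF assms] by (auto simp: perms_iff)
    show ?thesis using False unfolding Z by simp
  qed (use card_Z in simp)
qed

lemma Y_product_le_indicator:
  fixes x :: "nat \<Rightarrow> 'a::{field,finite}"
  assumes "\<pi> permutes {..<m * n}" "\<pi>' permutes {..<m * n}" "t \<in> vecs_sum (m * n) a"
  shows "Y m n x t \<pi> * Y m n x t \<pi>'
           \<le> of_bool (t \<in> sum_system_solutions {..<m * n} {..<n} {..<n} (block m \<pi>) (block m \<pi>') x x)"
proof -
  have "t \<in> sum_system_solutions {..<m * n} {..<n} {..<n} (block m \<pi>) (block m \<pi>') x x"
    if "Y m n x t \<pi> = 1" "Y m n x t \<pi>' = 1"
    using that assms
    by (auto simp: Y_def sum_system_solutions_def vecs_sum_def atLeast0LessThan sum_block_eq split: if_splits)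
  then show ?thesis by (auto simp: Y_def)
qed

lemma sum_Y_product_le:
  fixes x :: "nat \<Rightarrow> 'a::{field,finite}"
  assumes "0 < m" "\<pi> \<in> perms (m * n)" "\<pi>' \<in> perms (m * n)"
  shows "(\<Sum>t\<in>vecs_sum (m * n) a. Y m n x t \<pi> * Y m n x t \<pi>')
     \<le> real CARD('a) ^ (m * n) / real CARD('a) ^ (2 * n) *
        card {(\<alpha>, \<gamma>) \<in> ({..<n} \<rightarrow>\<^sub>E (UNIV :: 'a set)) \<times> ({..<n} \<rightarrow>\<^sub>E UNIV). labellings_agree m (m * n) \<pi> \<pi>' \<alpha> \<gamma>}"
proof -
  let ?q = "CARD('a)" and ?T = "vecs_sum (m * n) a"
  let ?Sol = "sum_system_solutions {..<m * n} {..<n} {..<n} (block m \<pi>) (block m \<pi>') x x"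
  have perm: "\<pi> permutes {..<m * n}" "\<pi>' permutes {..<m * n}" using assms(2,3) by (auto simp: perms_iff)
  have block_lt: "block m \<rho> u < n" if "\<rho> permutes {..<m * n}" "u < m * n" for \<rho> u
    using permutes_in_image[OF permutes_inv[OF that(1)], of u] that(2) assms(1)
    by (simp add: block_def div_less_iff_less_mult mult.commute)
  have pointwise: "Y m n x t \<pi> * Y m n x t \<pi>' \<le> of_bool (t \<in> ?Sol)" if "t \<in> ?T" for t
    using Y_product_le_indicator[OF perm that] .
  have "real (card ?Sol) * ?q ^ (2 * n) \<le> ?q ^ (m * n) *
      card {(\<alpha>, \<gamma>) \<in> ({..<n} \<rightarrow>\<^sub>E (UNIV :: 'a set)) \<times> ({..<n} \<rightarrow>\<^sub>E UNIV). labellings_agree m (m * n) \<pi> \<pi>' \<alpha> \<gamma>}"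
  proof -
    have "sum_system_dual {..<m * n} {..<n} {..<n} (block m \<pi>) (block m \<pi>')
        = {(\<alpha>, \<gamma>) \<in> ({..<n} \<rightarrow>\<^sub>E (UNIV :: 'a set)) \<times> ({..<n} \<rightarrow>\<^sub>E UNIV). labellings_agree m (m * n) \<pi> \<pi>' \<alpha> \<gamma>}"
      unfolding sum_system_dual_def labellings_agree_def by auto
    moreover have "block m \<pi> ` {..<m * n} \<subseteq> {..<n}" "block m \<pi>' ` {..<m * n} \<subseteq> {..<n}"
      using block_lt perm by auto
    ultimately show ?thesis
      using card_sum_system_solutions_le[of "{..<m * n}" "{..<n}" "{..<n}" "block m \<pi>" "block m \<pi>'" x x]
      by (simp add: mult_2 flip: of_nat_mult of_nat_power)
  qed
  then have sol_le: "real (card ?Sol) \<le> ?q ^ (m * n) / ?q ^ (2 * n) *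
      card {(\<alpha>, \<gamma>) \<in> ({..<n} \<rightarrow>\<^sub>E (UNIV :: 'a set)) \<times> ({..<n} \<rightarrow>\<^sub>E UNIV). labellings_agree m (m * n) \<pi> \<pi>' \<alpha> \<gamma>}"
    by (simp add: field_simps)
  have "(\<Sum>t\<in>?T. Y m n x t \<pi> * Y m n x t \<pi>') \<le> (\<Sum>t\<in>?T. of_bool (t \<in> ?Sol))"
    using pointwise by (rule sum_mono)
  also have "\<dots> \<le> real (card ?Sol)"
    by (simp add: card_mono finite_vecs_sum)
  finally show ?thesis using sol_le by simp
qed

lemma sum_card_agreeing_le:
  fixes m n :: nat
  assumes "0 < m"
  defines "L \<equiv> {..<n} \<rightarrow>\<^sub>E (UNIV :: 'a::finite set)"
  shows "(\<Sum>\<pi>\<in>perms (m * n). \<Sum>\<pi>'\<in>perms (m * n).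
            real (card {(\<alpha>, \<gamma>) \<in> L \<times> L. labellings_agree m (m * n) \<pi> \<pi>' \<alpha> \<gamma>}))
     \<le> fact (m * n) * (\<Sum>\<alpha>\<in>L. \<Sum>\<gamma>\<in>L.
            if histogram n \<alpha> = histogram n \<gamma> then real (\<Prod>v\<in>UNIV. fact (m * histogram n \<gamma> v)) else 0)"
proof -
  let ?P = "perms (m * n)" and ?agree = "\<lambda>\<pi> \<pi>' l. labellings_agree m (m * n) \<pi> \<pi>' (fst l) (snd l)"
  let ?B = "\<lambda>l. if histogram n (fst l) = histogram n (snd l)
              then real (\<Prod>v\<in>UNIV. fact (m * histogram n (snd l) v)) else 0"
  have fin: "finite ?P" "finite (L \<times> L)"
    unfolding perms_def L_def by (simp_all add: finite_permutations finite_PiE)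
  have "(\<Sum>\<pi>\<in>?P. \<Sum>\<pi>'\<in>?P. real (card {(\<alpha>, \<gamma>) \<in> L \<times> L. labellings_agree m (m * n) \<pi> \<pi>' \<alpha> \<gamma>}))
      = (\<Sum>\<pi>\<in>?P. \<Sum>\<pi>'\<in>?P. \<Sum>l\<in>L \<times> L. of_bool (?agree \<pi> \<pi>' l))"
  proof -
    have "{(\<alpha>, \<gamma>) \<in> L \<times> L. labellings_agree m (m * n) \<pi> \<pi>' \<alpha> \<gamma>} = (L \<times> L) \<inter> {l. ?agree \<pi> \<pi>' l}"
      for \<pi> \<pi>' by auto
    then show ?thesis using fin by simp
  qed
  also have "\<dots> = (\<Sum>\<pi>\<in>?P. \<Sum>l\<in>L \<times> L. \<Sum>\<pi>'\<in>?P. of_bool (?agree \<pi> \<pi>' l))"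
    by (rule sum.cong[OF refl], rule sum.swap)
  also have "\<dots> = (\<Sum>l\<in>L \<times> L. \<Sum>\<pi>\<in>?P. \<Sum>\<pi>'\<in>?P. of_bool (?agree \<pi> \<pi>' l))"
    by (rule sum.swap)
  also have "\<dots> = (\<Sum>l\<in>L \<times> L. \<Sum>\<pi>\<in>?P. real (card {\<pi>'\<in>?P. ?agree \<pi> \<pi>' l}))"
    using fin by (simp add: Int_def)
  also have "\<dots> \<le> (\<Sum>l\<in>L \<times> L. \<Sum>\<pi>\<in>?P. ?B l)"
  proof (intro sum_mono)
    fix l :: "(nat \<Rightarrow> 'a) \<times> (nat \<Rightarrow> 'a)" and \<pi> assume "\<pi> \<in> ?P"
    then have "real (card {\<pi>'\<in>?P. ?agree \<pi> \<pi>' l}) \<le> real (if histogram n (fst l) = histogram n (snd l)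
        then \<Prod>v\<in>UNIV. fact (m * histogram n (snd l) v) else 0)"
      unfolding of_nat_le_iff by (intro card_agreeing_perms_le[OF assms(1)]) (simp add: perms_iff)
    then show "real (card {\<pi>'\<in>?P. ?agree \<pi> \<pi>' l}) \<le> ?B l"
      by (simp split: if_splits del: of_nat_prod)
  qed
  also have "\<dots> = fact (m * n) * (\<Sum>l\<in>L \<times> L. ?B l)"
    unfolding perms_def by (simp add: card_permutations sum_distrib_left)
  finally show ?thesis
    by (simp add: sum.cartesian_product case_prod_beta')
qed

lemma sum_Y_products_le:
  fixes x :: "nat \<Rightarrow> 'a::{field,finite}"
  assumes "0 < m"
  shows "(\<Sum>\<pi>\<in>perms (m * n). \<Sum>\<pi>'\<in>perms (m * n). \<Sum>t\<in>vecs_sum (m * n) a. Y m n x t \<pi> * Y m n x t \<pi>')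
     \<le> real CARD('a) ^ (m * n) / real CARD('a) ^ (2 * n) * (fact (m * n) *
        (\<Sum>s\<in>histogram n ` ({..<n} \<rightarrow>\<^sub>E (UNIV :: 'a set)).
           real (card (fibre_size_functions {..<n} s)) ^ 2 * real (\<Prod>v\<in>UNIV. fact (m * s v))))"
    (is "_ \<le> ?c * (_ * ?H)")
proof -
  let ?P = "perms (m * n)" and ?L = "{..<n} \<rightarrow>\<^sub>E (UNIV :: 'a set)"
  have "(\<Sum>\<pi>\<in>?P. \<Sum>\<pi>'\<in>?P. \<Sum>t\<in>vecs_sum (m * n) a. Y m n x t \<pi> * Y m n x t \<pi>')
      \<le> (\<Sum>\<pi>\<in>?P. \<Sum>\<pi>'\<in>?P. ?c * card {(\<alpha>, \<gamma>) \<in> ?L \<times> ?L. labellings_agree m (m * n) \<pi> \<pi>' \<alpha> \<gamma>})"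
    using assms by (intro sum_mono sum_Y_product_le) auto
  also have "\<dots> = ?c * (\<Sum>\<pi>\<in>?P. \<Sum>\<pi>'\<in>?P. real (card {(\<alpha>, \<gamma>) \<in> ?L \<times> ?L. labellings_agree m (m * n) \<pi> \<pi>' \<alpha> \<gamma>}))"
    by (simp add: sum_distrib_left)
  also have "\<dots> \<le> ?c * (fact (m * n) * (\<Sum>\<alpha>\<in>?L. \<Sum>\<gamma>\<in>?L. if histogram n \<alpha> = histogram n \<gamma>
      then real (\<Prod>v\<in>UNIV. fact (m * histogram n \<gamma> v)) else 0))"
    using sum_card_agreeing_le[OF assms, of n, where 'a='a] by (intro mult_left_mono) auto
  also have "(\<Sum>\<alpha>\<in>?L. \<Sum>\<gamma>\<in>?L. if histogram n \<alpha> = histogram n \<gamma>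
      then real (\<Prod>v\<in>UNIV. fact (m * histogram n \<gamma> v)) else 0) = ?H"
    unfolding fibre_size_functions_histogram
    by (rule sum_pairs_same_image) (simp add: finite_PiE)
  finally show ?thesis .
qed

lemma second_moment_le_histogram_sum:
  fixes x :: "nat \<Rightarrow> 'a::{field,finite}"
  assumes "1 \<le> n" "1 \<le> m"
  shows "second_moment m n x \<le> real CARD('a) / real CARD('a) ^ (2 * n) *
     (\<Sum>s\<in>histogram n ` ({..<n} \<rightarrow>\<^sub>E (UNIV :: 'a set)).
        real (card (fibre_size_functions {..<n} s)) ^ 2 * (real (\<Prod>v\<in>UNIV. fact (m * s v)) / fact (m * n)))"
proof -
  let ?q = "real CARD('a)" and ?N = "m * n" and ?T = "vecs_sum (m * n) (\<Sum>i<n. x i)"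
  define H where "H = (\<Sum>s\<in>histogram n ` ({..<n} \<rightarrow>\<^sub>E (UNIV :: 'a set)).
    real (card (fibre_size_functions {..<n} s)) ^ 2 * real (\<Prod>v\<in>UNIV. fact (m * s v)))"
  have "0 \<le> H" unfolding H_def by (intro sum_nonneg mult_nonneg_nonneg) (simp_all add: prod_nonneg)
  have "CARD('a) ^ (?N - 1) \<le> card ?T"
    by (rule card_vecs_sum_ge) (use assms in simp)
  then have "?q ^ (?N - 1) \<le> real (card ?T)"
    by (metis of_nat_le_iff of_nat_power)
  then have "second_moment m n x \<le> ?q ^ ?N / ?q ^ (2 * n) * (fact ?N * H) / (fact ?N * fact ?N * ?q ^ (?N - 1))"
    unfolding second_moment_def Let_def perms_def[symmetric]
    using sum_Y_products_le[of m n x "\<Sum>i<n. x i"] assms \<open>0 \<le> H\<close>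
    by (intro frac_le) (simp_all add: perms_def card_permutations H_def)
  also have "\<dots> = ?q / ?q ^ (2 * n) * (H / fact ?N)"
  proof -
    have "?q ^ ?N = ?q * ?q ^ (?N - 1)" using assms by (simp flip: power_Suc)
    then show ?thesis by (simp add: field_simps)
  qed
  finally show ?thesis
    unfolding H_def by (simp add: sum_divide_distrib mult.assoc)
qed

lemma sum_histogram: "sum (histogram n \<alpha>) UNIV = n" for \<alpha> :: "nat \<Rightarrow> 'a::finite"
  unfolding histogram_def using sum_card_fibres[of "{..<n}" \<alpha>] by simp

lemma card_histogram_support_ge:
  fixes \<alpha> :: "nat \<Rightarrow> 'a::finite"
  assumes "1 \<le> n"
  shows "1 \<le> card {v. histogram n \<alpha> v \<noteq> 0}"
proof -
  have "0 \<in> {i\<in>{..<n}. \<alpha> i = \<alpha> 0}" using assms by simp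
  then have "\<alpha> 0 \<in> {v. histogram n \<alpha> v \<noteq> 0}"
    unfolding histogram_def by (auto simp: card_eq_0_iff)
  then show ?thesis by (auto simp: Suc_le_eq card_gt_0_iff)
qed

lemma histogram_class_le:
  fixes \<alpha> :: "nat \<Rightarrow> 'a::finite"
  assumes "1 \<le> n" "2 \<le> m"
  defines "s \<equiv> histogram n \<alpha>"
  defines "k \<equiv> card {v. s v \<noteq> 0}"
  shows "real (card (fibre_size_functions {..<n} s)) ^ 2 * (real (\<Prod>v\<in>UNIV. fact (m * s v)) / fact (m * n))
     \<le> (real n ^ 2 / (real n / 2) ^ (m - 2)) powr (real (k - 1) / 2) / real n ^ (k - 1)"
proof -
  define K where "K = {v. s v \<noteq> 0}"
  define Q where "Q = (\<Prod>v\<in>UNIV. fact (s v) :: nat)"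
  have "sum s K = sum s UNIV"
    unfolding K_def by (rule sum.mono_neutral_left) auto
  then have sum_K: "sum s K = n"
    using sum_histogram[of n \<alpha>] unfolding s_def by simp
  have Q_K: "Q = (\<Prod>v\<in>K. fact (s v))"
    unfolding Q_def K_def by (rule prod.mono_neutral_right) auto
  have k_ge: "1 \<le> k" unfolding k_def s_def by (rule card_histogram_support_ge[OF assms(1)])
  have k_le: "k \<le> n"
    using sum_bounded_below[of K 1 s] sum_K unfolding k_def K_def by simp
  have "K \<noteq> {}" using k_ge unfolding k_def K_def by (metis card.empty not_one_le_zero)
  then have "Q \<le> fact (sum s K + 1 - card K)"
    unfolding Q_K by (intro prod_fact_le_fact_sum) (auto simp: K_def)
  then have "Q \<le> fact (n + 1 - k)" using sum_K unfolding k_def K_def by simp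
  then have Q_le: "real Q \<le> fact (n + 1 - k)"
    by (metis of_nat_fact of_nat_le_iff)
  have "card (fibre_size_functions {..<n} s) * Q \<le> fact n"
    using card_fibre_size_functions_le[of "{..<n}" s] unfolding Q_def by simp
  then have DQ_le: "real (card (fibre_size_functions {..<n} s)) * real Q \<le> fact n"
    by (metis of_nat_fact of_nat_le_iff of_nat_mult)
  have "fact n ^ m * (\<Prod>v\<in>UNIV. fact (m * s v)) \<le> fact (m * n) * Q ^ m"
    using fact_power_prod_fact_mult_le[of UNIV s m] sum_histogram[of n \<alpha>] unfolding Q_def s_def by simp
  then have "real (fact n ^ m * (\<Prod>v\<in>UNIV. fact (m * s v))) \<le> real (fact (m * n) * Q ^ m)"
    by (simp only: of_nat_le_iff)
  then have "fact n ^ m * real (\<Prod>v\<in>UNIV. fact (m * s v)) \<le> fact (m * n) * real Q ^ m"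
    by (simp only: of_nat_mult of_nat_power of_nat_fact)
  then have c_le: "real (\<Prod>v\<in>UNIV. fact (m * s v)) / fact (m * n) \<le> (real Q / fact n) ^ m"
    by (simp add: field_simps power_divide)
  show ?thesis
    by (rule histogram_term_le[OF k_ge k_le assms(2) _ _ DQ_le _ c_le Q_le])
      (simp_all add: Q_def prod_pos prod_nonneg)
qed

lemma sum_histogram_classes_le:
  fixes n m :: nat
  assumes "1 \<le> n" "2 \<le> m"
  defines "r \<equiv> real n ^ 2 / (real n / 2) ^ (m - 2)"
  shows "(\<Sum>s\<in>histogram n ` ({..<n} \<rightarrow>\<^sub>E (UNIV :: 'a::finite set)).
            real (card (fibre_size_functions {..<n} s)) ^ 2 * (real (\<Prod>v\<in>UNIV. fact (m * s v)) / fact (m * n)))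
     \<le> (\<Sum>k<CARD('a). real CARD('a) ^ (k + 1) * r powr (real k / 2))"
proof -
  let ?q = "CARD('a)" and ?H = "histogram n ` ({..<n} \<rightarrow>\<^sub>E (UNIV :: 'a set))"
  define g where "g k = r powr (real (k - 1) / 2) / real n ^ (k - 1)" for k
  have "(\<Sum>s\<in>?H. real (card (fibre_size_functions {..<n} s)) ^ 2 * (real (\<Prod>v\<in>UNIV. fact (m * s v)) / fact (m * n)))
      \<le> (\<Sum>s\<in>?H. g (card {v. s v \<noteq> 0}))"
    unfolding g_def r_def using histogram_class_le[OF assms(1,2)] by (intro sum_mono) auto
  also have "\<dots> \<le> (\<Sum>k=1..?q. real ((?q choose k) * n ^ (k - 1)) * g k)"
    using sum_histogram card_histogram_support_ge[OF assms(1)]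
    by (intro sum_by_support_size_le) (auto simp: g_def r_def finite_PiE)
  also have "\<dots> = (\<Sum>k=1..?q. real (?q choose k) * r powr (real (k - 1) / 2))"
    unfolding g_def using assms(1) by (intro sum.cong) simp_all
  also have "\<dots> \<le> (\<Sum>k=1..?q. real ?q ^ k * r powr (real (k - 1) / 2))"
  proof (intro sum_mono mult_right_mono)
    fix k assume "k \<in> {1..?q}"
    then have "?q choose k \<le> ?q ^ k" by (intro binomial_le_pow) simp
    then show "real (?q choose k) \<le> real ?q ^ k" by (metis of_nat_le_iff of_nat_power)
  qed simp
  also have "\<dots> = (\<Sum>k<?q. real ?q ^ (k + 1) * r powr (real k / 2))"
    using sum.atLeast1_atMost_eq[where g="\<lambda>k. real ?q ^ k * r powr (real (k - 1) / 2)" and n="?q"] by simp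
  finally show ?thesis .
qed

theorem mainTheorem4:
  fixes x :: "nat \<Rightarrow> 'a::{field,finite}" and m n :: nat
  assumes "n \<ge> 1" and "m \<ge> 3"
  shows "ennreal (second_moment m n x) \<le>
    (\<Sum>k. ennreal (real CARD('a) ^ (k+1) / real CARD('a) ^ (2*n - 1) *
        (real n ^ 2 / (real n / 2) ^ (m - 2)) powr (real k / 2)))"
proof -
  let ?q = "real CARD('a)" and ?r = "real n ^ 2 / (real n / 2) ^ (m - 2)"
  define f where "f k = ?q ^ (k + 1) / ?q ^ (2 * n - 1) * ?r powr (real k / 2)" for k
  have "second_moment m n x \<le> ?q / ?q ^ (2 * n) * (\<Sum>k<CARD('a). ?q ^ (k + 1) * ?r powr (real k / 2))"
    using assms
    by (intro order_trans[OF second_moment_le_histogram_sum mult_left_mono[OF sum_histogram_classes_le]])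
      simp_all
  also have "\<dots> = (\<Sum>k<CARD('a). f k)"
  proof -
    have "?q ^ (2 * n) = ?q * ?q ^ (2 * n - 1)" using assms(1) by (simp flip: power_Suc)
    then show ?thesis unfolding f_def sum_distrib_left by (intro sum.cong) simp_all
  qed
  finally have "ennreal (second_moment m n x) \<le> ennreal (\<Sum>k<CARD('a). f k)"
    by (rule ennreal_leI)
  also have "\<dots> = (\<Sum>k<CARD('a). ennreal (f k))"
    by (rule sum_ennreal[symmetric]) (simp add: f_def)
  also have "\<dots> \<le> (\<Sum>k. ennreal (f k))"
    by (rule sum_le_suminf) auto
  finally show ?thesis unfolding f_def .
qed

end
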